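(* Let $z_1,\dots,z_m\in\mathbb C$ and let $T$ be a spanning tree on the vertex set $\{z_1,\dots,z_m\}$ (edges being segments $e$ with endpoints $e^-,e^+$) such that for all $i,j$, $|z_i-z_j|$ is within a multiplicative constant $c\ge1$ of the length (sum of $|e^+-e^-|$ over edges) of the path in $T$ connecting $z_i$ and $z_j$. For a point $z_p$ and an edge $e$ let $d_+(z_p,e)=\max(|z_p-e^-|,|z_p-e^+|)$. Then $$\prod_{e\in T}\prod_{p=1}^m d_+(z_p,e)^{1/2}\le C\prod_{i<j}|z_i-z_j|,$$ where $C$ depends only on $m$ (and $c$). *)

theory Defs
  imports Complex_Main
begin

text \<open>Undirected graphs on the vertex set {0..<m}: an edge is a 2-element set of vertices.\<close>

definition adj :: "nat set set \<Rightarrow> nat \<Rightarrow> nat \<Rightarrow> bool" where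
  "adj E a b \<longleftrightarrow> {a, b} \<in> E"

definition simple_path :: "nat set set \<Rightarrow> nat list \<Rightarrow> nat \<Rightarrow> nat \<Rightarrow> bool" where
  "simple_path E vs i j \<longleftrightarrow> vs \<noteq> [] \<and> hd vs = i \<and> last vs = j \<and> distinct vs \<and>
     (\<forall>k. Suc k < length vs \<longrightarrow> adj E (vs ! k) (vs ! Suc k))"

definition is_graph :: "nat \<Rightarrow> nat set set \<Rightarrow> bool" where
  "is_graph m E \<longleftrightarrow> (\<forall>e\<in>E. card e = 2 \<and> e \<subseteq> {..<m})"

definition connected_graph :: "nat \<Rightarrow> nat set set \<Rightarrow> bool" where
  "connected_graph m E \<longleftrightarrow> (\<forall>i<m. \<forall>j<m. \<exists>vs. simple_path E vs i j)"

definition has_cycle :: "nat set set \<Rightarrow> bool" where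
  "has_cycle E \<longleftrightarrow> (\<exists>vs. length vs \<ge> 3 \<and> distinct vs \<and>
     (\<forall>k. Suc k < length vs \<longrightarrow> adj E (vs ! k) (vs ! Suc k)) \<and> adj E (last vs) (hd vs))"

definition spanning_tree :: "nat \<Rightarrow> nat set set \<Rightarrow> bool" where
  "spanning_tree m E \<longleftrightarrow> is_graph m E \<and> connected_graph m E \<and> \<not> has_cycle E"

definition path_length :: "(nat \<Rightarrow> complex) \<Rightarrow> nat list \<Rightarrow> real" where
  "path_length z vs = (\<Sum>k<length vs - 1. cmod (z (vs ! Suc k) - z (vs ! k)))"

definition dplus :: "(nat \<Rightarrow> complex) \<Rightarrow> nat \<Rightarrow> nat set \<Rightarrow> real" where
  "dplus z p e = Max ((\<lambda>v. cmod (z p - z v)) ` e)"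

end

theory Submission
  imports Defs
begin

text \<open>Root the tree at a vertex \<open>p\<close>. Every edge then has the form \<open>{r, q}\<close>, where \<open>q \<noteq> p\<close> and \<open>r\<close> is
  the parent of \<open>q\<close>, i.e. its predecessor on the tree path from \<open>p\<close>; this is a bijection between the
  edges and the vertices other than \<open>p\<close>. Since the tree path from \<open>p\<close> to \<open>r\<close> is a prefix of the one
  to \<open>q\<close>, the quasi-geodesic property gives \<open>|z\<^sub>p - z\<^sub>r| \<le> c\<^sup>2 |z\<^sub>p - z\<^sub>q|\<close>, hence
  \<open>d\<^sub>+(z\<^sub>p, {r, q}) \<le> c\<^sup>2 |z\<^sub>p - z\<^sub>q|\<close>. Multiplying over all edges and all roots \<open>p\<close>, every unordered
  pair \<open>{i, j}\<close> occurs twice, which yields \<open>C = c\<^bsup>m(m-1)\<^esup>\<close>.\<close>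

lemma adj_commute: "adj E a b \<longleftrightarrow> adj E b a"
  unfolding adj_def by (simp add: insert_commute)

lemma successively_adj_rev: "successively (adj E) (rev vs) \<longleftrightarrow> successively (adj E) vs"
  by (simp add: adj_commute)

lemma simple_path_iff_successively:
  "simple_path E vs i j \<longleftrightarrow>
     vs \<noteq> [] \<and> hd vs = i \<and> last vs = j \<and> distinct vs \<and> successively (adj E) vs"
  unfolding simple_path_def successively_conv_nth by blast

lemma has_cycle_iff_closed_walk:
  "has_cycle E \<longleftrightarrow>
     (\<exists>vs. length vs \<ge> 3 \<and> distinct vs \<and> successively (adj E) (vs @ [hd vs]))"
proof -
  have "successively (adj E) (vs @ [hd vs]) \<longleftrightarrow>
      successively (adj E) vs \<and> adj E (last vs) (hd vs)" if "vs \<noteq> []" for vs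
    using that by (simp add: successively_append_iff)
  then show ?thesis
    unfolding has_cycle_def successively_conv_nth[symmetric]
    by (metis list.size(3) not_numeral_le_zero)
qed

lemma successively_join:
  "successively P (xs @ [u]) \<Longrightarrow> successively P (u # ys) \<Longrightarrow> successively P (xs @ u # ys)"
  by (induction xs rule: induct_list012) auto

lemma has_cycle_of_forked_paths:
  assumes "successively (adj E) (i # A @ [u])" "successively (adj E) (i # C @ [u])"
    and "distinct (i # u # A @ C)" "A @ C \<noteq> []"
  shows "has_cycle E"
proof -
  let ?cyc = "i # A @ u # rev C"
  have "successively (adj E) (u # rev C @ [i])"
    using successively_adj_rev[of E "i # C @ [u]"] assms(2) by simp
  with assms(1) have "successively (adj E) (?cyc @ [hd ?cyc])"
    using successively_join[of "adj E" "i # A" u "rev C @ [i]"] by simp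
  moreover have "length ?cyc \<ge> 3" "distinct ?cyc"
    using assms(3,4) by (auto simp: Suc_le_eq)
  ultimately show ?thesis
    unfolding has_cycle_iff_closed_walk by blast
qed

lemma acyclic_paths_from_eq:
  assumes "\<not> has_cycle E"
  shows "distinct (i # vs) \<Longrightarrow> distinct (i # ws) \<Longrightarrow>
    successively (adj E) (i # vs) \<Longrightarrow> successively (adj E) (i # ws) \<Longrightarrow>
    last (i # vs) = last (i # ws) \<Longrightarrow> vs = ws"
proof (induction vs arbitrary: i ws)
  case Nil
  then show ?case
    by (cases ws) (auto dest: last_in_set split: if_splits)
next
  case (Cons x vs)
  then obtain y ws' where ws: "ws = y # ws'"
    by (cases ws) (auto dest: last_in_set split: if_splits)
  show ?case
  proof (cases "x = y")
    case True
    then show ?thesis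
      using Cons.IH[of x ws'] Cons.prems ws by auto
  next
    case False
    \<comment> \<open>The paths leave \<open>i\<close> through different neighbours; closing them up at the first vertex
      of the first path that also lies on the second gives a cycle.\<close>
    have "last (x # vs) \<in> set ws"
      using Cons.prems(5) ws by simp
    then obtain A u B where A: "x # vs = A @ u # B" "u \<in> set ws" "\<forall>a\<in>set A. a \<notin> set ws"
      using split_list_first_prop[of "x # vs" "\<lambda>a. a \<in> set ws"] by (metis last_in_set list.discI)
    obtain C D where C: "ws = C @ u # D"
      using A(2) by (meson split_list)
    have "successively (adj E) (i # A @ [u])"
      using Cons.prems(3) A(1) by (metis append.assoc append_Cons append_Nil successively_append_iff)
    moreover have "successively (adj E) (i # C @ [u])"
      using Cons.prems(4) C by (metis append.assoc append_Cons append_Nil successively_append_iff)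
    moreover have "distinct (i # u # A @ C)"
      using Cons.prems(1,2) A C by auto
    moreover have "A @ C \<noteq> []"
      using False A(1) C ws by (cases A; cases C) auto
    ultimately have "has_cycle E"
      by (rule has_cycle_of_forked_paths)
    with assms show ?thesis ..
  qed
qed

lemma acyclic_simple_path_unique:
  assumes "\<not> has_cycle E" "simple_path E vs i j" "simple_path E ws i j"
  shows "vs = ws"
proof -
  obtain vs' ws' where "vs = i # vs'" "ws = i # ws'"
    using assms(2,3) unfolding simple_path_iff_successively by (metis list.collapse)
  with assms show ?thesis
    using acyclic_paths_from_eq[OF assms(1), of i vs' ws'] unfolding simple_path_iff_successively by auto
qed

definition quasi_geodesic_tree :: "real \<Rightarrow> nat \<Rightarrow> (nat \<Rightarrow> complex) \<Rightarrow> nat set set \<Rightarrow> bool" where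
  "quasi_geodesic_tree c m z T \<longleftrightarrow>
     (\<forall>i<m. \<forall>j<m. \<forall>vs. simple_path T vs i j \<longrightarrow>
        path_length z vs \<le> c * cmod (z i - z j) \<and> cmod (z i - z j) \<le> c * path_length z vs)"

lemma path_length_snoc_ge: "path_length z vs \<le> path_length z (vs @ [v])"
proof -
  have "path_length z vs = (\<Sum>k<length vs - 1. cmod (z ((vs @ [v]) ! Suc k) - z ((vs @ [v]) ! k)))"
    unfolding path_length_def by (intro sum.cong) (auto simp: nth_append)
  also have "\<dots> \<le> path_length z (vs @ [v])"
    unfolding path_length_def by (intro sum_mono2) auto
  finally show ?thesis .
qed

lemma dplus_doubleton: "dplus z p {a, b} = max (cmod (z p - z a)) (cmod (z p - z b))"
  unfolding dplus_def by simp

lemma dplus_nonneg: "finite e \<Longrightarrow> e \<noteq> {} \<Longrightarrow> 0 \<le> dplus z p e"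
  unfolding dplus_def by (auto simp: Max_ge_iff)

lemma prod_off_diagonal_symmetric:
  fixes g :: "nat \<Rightarrow> nat \<Rightarrow> 'a::comm_monoid_mult"
  assumes "\<And>i j. g i j = g j i"
  shows "(\<Prod>i<m. \<Prod>j\<in>{..<m} - {i}. g i j) = (\<Prod>i<m. \<Prod>j\<in>{i<..<m}. g i j)\<^sup>2"
proof -
  let ?S = "SIGMA i:{..<m}. {i<..<m}"
  have "(\<Prod>i<m. \<Prod>j\<in>{..<m} - {i}. g i j) = prod (case_prod g) (SIGMA i:{..<m}. {..<m} - {i})"
    by (rule prod.Sigma) auto
  also have "(SIGMA i:{..<m}. {..<m} - {i}) = ?S \<union> prod.swap ` ?S"
    by (auto simp: image_iff)
  also have "prod (case_prod g) (?S \<union> prod.swap ` ?S) =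
      prod (case_prod g) ?S * prod (case_prod g) (prod.swap ` ?S)"
    by (rule prod.union_disjoint) auto
  also have "prod (case_prod g) (prod.swap ` ?S) = prod (case_prod g) ?S"
    by (subst prod.reindex) (auto simp: assms intro!: prod.cong)
  also have "prod (case_prod g) ?S = (\<Prod>i<m. \<Prod>j\<in>{i<..<m}. g i j)"
    by (rule prod.Sigma[symmetric]) auto
  finally show ?thesis
    by (simp add: power2_eq_square)
qed

definition tree_path :: "nat set set \<Rightarrow> nat \<Rightarrow> nat \<Rightarrow> nat list" where
  "tree_path T p q = (THE vs. simple_path T vs p q)"

definition tree_parent :: "nat set set \<Rightarrow> nat \<Rightarrow> nat \<Rightarrow> nat" where
  "tree_parent T p q = last (butlast (tree_path T p q))"

context
  fixes m :: nat and T :: "nat set set"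
  assumes tree: "spanning_tree m T"
begin

lemma adj_less:
  assumes "adj T a b"
  shows "a < m" "b < m"
  using tree assms unfolding spanning_tree_def is_graph_def adj_def by auto

lemma tree_path_eqI:
  assumes "p < m" "q < m" "simple_path T vs p q"
  shows "tree_path T p q = vs"
proof -
  have acyclic: "\<not> has_cycle T"
    using tree unfolding spanning_tree_def by blast
  with assms(3) have "\<And>ws. simple_path T ws p q \<Longrightarrow> ws = vs"
    using acyclic_simple_path_unique by blast
  with assms(3) show ?thesis
    unfolding tree_path_def by (rule the_equality)
qed

lemma simple_path_tree_path:
  assumes "p < m" "q < m"
  shows "simple_path T (tree_path T p q) p q"
proof -
  obtain vs where "simple_path T vs p q"
    using tree assms unfolding spanning_tree_def connected_graph_def by blast
  with assms show ?thesis
    using tree_path_eqI by simp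
qed

lemma tree_path_parent:
  assumes "p < m" "q < m" "q \<noteq> p"
  shows "tree_path T p q = tree_path T p (tree_parent T p q) @ [q]"
    and "{tree_parent T p q, q} \<in> T" "tree_parent T p q < m"
proof -
  let ?vs = "tree_path T p q"
  have path: "simple_path T ?vs p q"
    using simple_path_tree_path assms by blast
  then have split: "?vs = butlast ?vs @ [q]"
    unfolding simple_path_iff_successively by (metis append_butlast_last_id)
  have ne: "butlast ?vs \<noteq> []"
  proof
    assume "butlast ?vs = []"
    with split have "?vs = [q]" by simp
    with path assms(3) show False
      unfolding simple_path_iff_successively by simp
  qed
  have "hd (butlast ?vs) = p" "distinct (butlast ?vs)" "successively (adj T) (butlast ?vs @ [q])"
    using path ne split unfolding simple_path_iff_successively
    by (metis hd_append2, metis distinct_append, metis)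
  then have "simple_path T (butlast ?vs) p (tree_parent T p q)"
    and "adj T (tree_parent T p q) q"
    using ne unfolding simple_path_iff_successively tree_parent_def
    by (auto simp: successively_append_iff)
  then show "{tree_parent T p q, q} \<in> T" "tree_parent T p q < m"
    and "?vs = tree_path T p (tree_parent T p q) @ [q]"
    using adj_less tree_path_eqI assms(1) split unfolding adj_def by auto
qed

lemma tree_parent_eqI:
  assumes "p < m" "{a, b} \<in> T" "b \<notin> set (tree_path T p a)"
  shows "b \<noteq> p" "tree_parent T p b = a"
proof -
  have "adj T a b"
    using assms(2) unfolding adj_def .
  then have "a < m" "b < m"
    using adj_less by auto
  then have path: "simple_path T (tree_path T p a) p a"
    using assms(1) simple_path_tree_path by blast
  then have "simple_path T (tree_path T p a @ [b]) p b"
    using \<open>adj T a b\<close> assms(3) unfolding simple_path_iff_successively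
    by (auto simp: successively_append_iff hd_append)
  then have "tree_path T p b = tree_path T p a @ [b]"
    using tree_path_eqI assms(1) \<open>b < m\<close> by blast
  then show "tree_parent T p b = a"
    using path unfolding tree_parent_def simple_path_iff_successively by simp
  show "b \<noteq> p"
    using path assms(3) unfolding simple_path_iff_successively by (metis list.set_sel(1))
qed

lemma tree_path_prefix:
  assumes "p < m" "a < m" "b < m" "tree_path T p a = X @ b # Y"
  shows "tree_path T p b = X @ [b]"
proof -
  have "simple_path T (X @ b # Y) p a"
    using simple_path_tree_path[OF assms(1,2)] assms(4) by simp
  then have "simple_path T (X @ [b]) p b"
    unfolding simple_path_iff_successively
    by (auto simp: successively_append_iff hd_append)
  then show ?thesis
    using tree_path_eqI assms(1,3) by blast
qed

lemma inj_on_parent_edge: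
  assumes "p < m"
  shows "inj_on (\<lambda>q. {tree_parent T p q, q}) ({..<m} - {p})"
proof (rule inj_onI, rule ccontr)
  fix q q' assume "q \<in> {..<m} - {p}" "q' \<in> {..<m} - {p}"
  then have q: "q < m" "q \<noteq> p" and q': "q' < m" "q' \<noteq> p"
    by auto
  assume edge: "{tree_parent T p q, q} = {tree_parent T p q', q'}" and "q \<noteq> q'"
  have "q \<in> {tree_parent T p q', q'}"
    unfolding edge[symmetric] by simp
  with \<open>q \<noteq> q'\<close> have "tree_parent T p q' = q"
    by blast
  have "q' \<in> {tree_parent T p q, q}"
    unfolding edge by simp
  with \<open>q \<noteq> q'\<close> have "tree_parent T p q = q'"
    by blast
  note parents = \<open>tree_parent T p q' = q\<close> this
  have "length (tree_path T p q') = Suc (length (tree_path T p q))"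
    using tree_path_parent(1)[OF assms q'] unfolding parents by (simp only: length_append_singleton)
  moreover have "length (tree_path T p q) = Suc (length (tree_path T p q'))"
    using tree_path_parent(1)[OF assms q] unfolding parents by (simp only: length_append_singleton)
  ultimately show False
    by simp
qed

lemma parent_edges_eq:
  assumes "p < m"
  shows "(\<lambda>q. {tree_parent T p q, q}) ` ({..<m} - {p}) = T"
proof (intro equalityI subsetI)
  fix e assume "e \<in> (\<lambda>q. {tree_parent T p q, q}) ` ({..<m} - {p})"
  then show "e \<in> T"
    using tree_path_parent(2) assms by auto
next
  fix e assume e: "e \<in> T"
  then obtain a b where ab: "e = {a, b}" "a \<noteq> b"
    using tree unfolding spanning_tree_def is_graph_def by (metis card_2_iff)
  then have "a < m" "b < m"
    using e adj_less unfolding adj_def by auto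
  have parent_edge: "e \<in> (\<lambda>q. {tree_parent T p q, q}) ` ({..<m} - {p})"
    if "e = {x, y}" "y < m" "y \<notin> set (tree_path T p x)" for x y
    using tree_parent_eqI[OF assms, of x y] that e by (auto simp: image_iff)
  show "e \<in> (\<lambda>q. {tree_parent T p q, q}) ` ({..<m} - {p})"
  proof (cases "b \<in> set (tree_path T p a)")
    case False
    show ?thesis
      using ab(1) \<open>b < m\<close> False by (rule parent_edge)
  next
    case True
    then obtain X Y where XY: "tree_path T p a = X @ b # Y"
      by (meson split_list)
    have "simple_path T (X @ b # Y) p a"
      using XY simple_path_tree_path[OF assms \<open>a < m\<close>] by simp
    then have "a \<in> set Y" "distinct (X @ b # Y)"
      using ab(2) unfolding simple_path_iff_successively by (auto split: if_splits)
    then have "a \<notin> set (X @ [b])"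
      using ab(2) by auto
    then have "a \<notin> set (tree_path T p b)"
      using tree_path_prefix[OF assms \<open>a < m\<close> \<open>b < m\<close> XY] by simp
    moreover have "e = {b, a}"
      using ab(1) by (simp add: insert_commute)
    ultimately show ?thesis
      using \<open>a < m\<close> by (intro parent_edge)
  qed
qed

lemma bij_betw_parent_edge:
  assumes "p < m"
  shows "bij_betw (\<lambda>q. {tree_parent T p q, q}) ({..<m} - {p}) T"
  using inj_on_parent_edge[OF assms] parent_edges_eq[OF assms] by (rule bij_betw_imageI)


lemma dplus_parent_edge_le:
  assumes geodesic: "quasi_geodesic_tree c m z T" and "c \<ge> 1" and pq: "p < m" "q < m" "q \<noteq> p"
  shows "dplus z p {tree_parent T p q, q} \<le> c\<^sup>2 * cmod (z p - z q)"
proof -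
  let ?r = "tree_parent T p q"
  have "?r < m"
    using pq by (rule tree_path_parent(3))
  then have "simple_path T (tree_path T p ?r) p ?r"
    using simple_path_tree_path[OF pq(1)] by blast
  then have "cmod (z p - z ?r) \<le> c * path_length z (tree_path T p ?r)"
    using geodesic pq(1) \<open>?r < m\<close> unfolding quasi_geodesic_tree_def by blast
  also have "\<dots> \<le> c * path_length z (tree_path T p q)"
    using \<open>c \<ge> 1\<close> path_length_snoc_ge[of z "tree_path T p ?r" q]
    unfolding tree_path_parent(1)[OF pq] by (intro mult_left_mono) simp_all
  also have "\<dots> \<le> c * (c * cmod (z p - z q))"
  proof (rule mult_left_mono)
    show "path_length z (tree_path T p q) \<le> c * cmod (z p - z q)"
      using geodesic simple_path_tree_path[OF pq(1,2)] pq(1,2)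
      unfolding quasi_geodesic_tree_def by blast
  qed (use \<open>c \<ge> 1\<close> in simp)
  finally have "cmod (z p - z ?r) \<le> c\<^sup>2 * cmod (z p - z q)"
    by (simp add: power2_eq_square mult.assoc)
  moreover have "cmod (z p - z q) \<le> c\<^sup>2 * cmod (z p - z q)"
    using \<open>c \<ge> 1\<close> by (simp add: mult_le_cancel_right1 one_le_power)
  ultimately show ?thesis
    by (simp add: dplus_doubleton)
qed

lemma prod_sqrt_dplus_le:
  assumes geodesic: "quasi_geodesic_tree c m z T" and "c \<ge> 1" "p < m"
  shows "(\<Prod>e\<in>T. sqrt (dplus z p e)) \<le> c ^ (m - 1) * (\<Prod>q\<in>{..<m} - {p}. sqrt (cmod (z p - z q)))"
proof -
  have "(\<Prod>e\<in>T. sqrt (dplus z p e)) = (\<Prod>q\<in>{..<m} - {p}. sqrt (dplus z p {tree_parent T p q, q}))"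
    using prod.reindex_bij_betw[OF bij_betw_parent_edge[OF \<open>p < m\<close>], of "\<lambda>e. sqrt (dplus z p e)"]
    by simp
  also have "\<dots> \<le> (\<Prod>q\<in>{..<m} - {p}. c * sqrt (cmod (z p - z q)))"
  proof (intro prod_mono conjI)
    fix q assume q: "q \<in> {..<m} - {p}"
    show "0 \<le> sqrt (dplus z p {tree_parent T p q, q})"
      by (simp add: dplus_nonneg)
    have "sqrt (dplus z p {tree_parent T p q, q}) \<le> sqrt (c\<^sup>2 * cmod (z p - z q))"
      using dplus_parent_edge_le[OF geodesic] q assms(2,3) by simp
    also have "\<dots> = c * sqrt (cmod (z p - z q))"
      using \<open>c \<ge> 1\<close> by (simp add: real_sqrt_mult)
    finally show "sqrt (dplus z p {tree_parent T p q, q}) \<le> c * sqrt (cmod (z p - z q))" .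
  qed
  also have "\<dots> = c ^ (m - 1) * (\<Prod>q\<in>{..<m} - {p}. sqrt (cmod (z p - z q)))"
    using \<open>p < m\<close> by (simp add: prod.distrib)
  finally show ?thesis .
qed

end

theorem lemmaA5:
  fixes m :: nat and c :: real
  assumes "c \<ge> 1"
  shows "\<exists>C::real. \<forall>(z :: nat \<Rightarrow> complex) (T :: nat set set).
     spanning_tree m T \<and>
     (\<forall>i<m. \<forall>j<m. \<forall>vs. simple_path T vs i j \<longrightarrow>
        path_length z vs \<le> c * cmod (z i - z j) \<and> cmod (z i - z j) \<le> c * path_length z vs)
     \<longrightarrow> (\<Prod>e\<in>T. \<Prod>p<m. sqrt (dplus z p e))
           \<le> C * (\<Prod>i<m. \<Prod>j\<in>{i<..<m}. cmod (z i - z j))"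
proof (intro exI[of _ "c ^ (m * (m - 1))"] allI impI, elim conjE)
  fix z :: "nat \<Rightarrow> complex" and T
  assume tree: "spanning_tree m T"
    and distortion: "\<forall>i<m. \<forall>j<m. \<forall>vs. simple_path T vs i j \<longrightarrow>
        path_length z vs \<le> c * cmod (z i - z j) \<and> cmod (z i - z j) \<le> c * path_length z vs"
  from distortion have geodesic: "quasi_geodesic_tree c m z T"
    unfolding quasi_geodesic_tree_def .
  have edges_finite_nonempty: "finite e \<and> e \<noteq> {}" if "e \<in> T" for e
    using tree that unfolding spanning_tree_def is_graph_def by (auto simp: card_2_iff)
  have "(\<Prod>e\<in>T. \<Prod>p<m. sqrt (dplus z p e)) = (\<Prod>p<m. \<Prod>e\<in>T. sqrt (dplus z p e))"
    by (rule prod.swap)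
  also have "\<dots> \<le> (\<Prod>p<m. c ^ (m - 1) * (\<Prod>q\<in>{..<m} - {p}. sqrt (cmod (z p - z q))))"
    using prod_sqrt_dplus_le[OF tree geodesic assms] edges_finite_nonempty
    by (intro prod_mono conjI prod_nonneg) (auto simp: dplus_nonneg)
  also have "\<dots> = c ^ (m * (m - 1)) * (\<Prod>p<m. \<Prod>q\<in>{..<m} - {p}. sqrt (cmod (z p - z q)))"
    by (simp add: prod.distrib power_mult mult.commute[of m])
  also have "\<dots> = c ^ (m * (m - 1)) * (\<Prod>i<m. \<Prod>j\<in>{i<..<m}. sqrt (cmod (z i - z j)))\<^sup>2"
    by (subst prod_off_diagonal_symmetric) (simp_all add: norm_minus_commute)
  also have "\<dots> = c ^ (m * (m - 1)) * (\<Prod>i<m. \<Prod>j\<in>{i<..<m}. cmod (z i - z j))"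
    by (simp add: prod_power_distrib)
  finally show "(\<Prod>e\<in>T. \<Prod>p<m. sqrt (dplus z p e))
      \<le> c ^ (m * (m - 1)) * (\<Prod>i<m. \<Prod>j\<in>{i<..<m}. cmod (z i - z j))" .
qed

end
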